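(* Let $\mathcal H$ be a separable complex Hilbert space, $A_1,A_2\in L(\mathcal H)^+$, $B\in L(\mathcal H)$ with closed range. Then $B$ admits an $A_1A_2$-inverse if and only if the pairs $(A_1,R(B))$ and $(A_2,N(A_1B))$ are compatible.
   Context: $\|z\|_{A}=\langle Az,z\rangle^{1/2}$ for $A\in L(\mathcal H)^+$. For $y\in\mathcal H$, $x_0$ is an $A_1$-least squares solution ($A_1$-LSS) of $Bx=y$ if $\|y-Bx_0\|_{A_1}\le\|y-Bx\|_{A_1}$ for all $x\in\mathcal H$. $G\in L(\mathcal H)$ is an $A_1$-inverse of $B$ if $Gy$ is an $A_1$-LSS of $Bx=y$ for every $y$; $G$ is an $A_1A_2$-inverse of $B$ if moreover, for each $y$, $\|Gy\|_{A_2}\le\|x_0\|_{A_2}$ for every $A_1$-LSS $x_0$ of $Bx=y$. A pair $(A,\mathcal S)$ ($A\in L(\mathcal H)^+$, $\mathcal S$ closed subspace) is compatible if there exists $Q\in L(\mathcal H)$ with $Q^2=Q$, $R(Q)=\mathcal S$, $AQ=Q^*A$. $N(\cdot)$ denotes nullspace. *)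

theory Defs
  imports "HOL-Analysis.Analysis"
begin

class complex_inner = real_normed_vector +
  fixes scaleC :: "complex \<Rightarrow> 'a \<Rightarrow> 'a" (infixr "*\<^sub>C" 75)
    and cinner :: "'a \<Rightarrow> 'a \<Rightarrow> complex"
  assumes scaleC_add_right: "c *\<^sub>C (x + y) = c *\<^sub>C x + c *\<^sub>C y"
    and scaleC_add_left: "(b + c) *\<^sub>C x = b *\<^sub>C x + c *\<^sub>C x"
    and scaleC_scaleC: "b *\<^sub>C (c *\<^sub>C x) = (b * c) *\<^sub>C x"
    and scaleC_one: "1 *\<^sub>C x = x"
    and scaleR_scaleC: "scaleR r x = complex_of_real r *\<^sub>C x"
    and cinner_commute: "cinner x y = cnj (cinner y x)"
    and cinner_add_left: "cinner (x + y) z = cinner x z + cinner y z"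
    and cinner_scaleC_left: "cinner (c *\<^sub>C x) y = c * cinner x y"
    and cinner_self_real: "cinner x x \<in> \<real>"
    and cinner_self_nonneg: "0 \<le> Re (cinner x x)"
    and cinner_self_eq_0: "cinner x x = 0 \<longleftrightarrow> x = 0"
    and norm_eq_sqrt_cinner: "norm x = sqrt (Re (cinner x x))"

definition separable_space :: "'a::topological_space itself \<Rightarrow> bool" where
  "separable_space _ \<longleftrightarrow> (\<exists>D::'a set. countable D \<and> closure D = UNIV)"

definition bounded_clinear_op :: "('a::complex_inner \<Rightarrow> 'a) \<Rightarrow> bool" where
  "bounded_clinear_op T \<longleftrightarrow>
     (\<forall>x y. T (x + y) = T x + T y) \<and> (\<forall>c x. T (c *\<^sub>C x) = c *\<^sub>C T x) \<and>
     (\<exists>K. \<forall>x. norm (T x) \<le> norm x * K)"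

definition positive_op :: "('a::complex_inner \<Rightarrow> 'a) \<Rightarrow> bool" where
  "positive_op A \<longleftrightarrow> bounded_clinear_op A \<and>
     (\<forall>z. cinner (A z) z \<in> \<real> \<and> 0 \<le> Re (cinner (A z) z))"

definition is_adjoint :: "('a::complex_inner \<Rightarrow> 'a) \<Rightarrow> ('a \<Rightarrow> 'a) \<Rightarrow> bool" where
  "is_adjoint T Ts \<longleftrightarrow> (\<forall>x y. cinner (T x) y = cinner x (Ts y))"

definition seminormA :: "('a::complex_inner \<Rightarrow> 'a) \<Rightarrow> 'a \<Rightarrow> real" where
  "seminormA A z = sqrt (Re (cinner (A z) z))"

definition is_A_LSS :: "('a::complex_inner \<Rightarrow> 'a) \<Rightarrow> ('a \<Rightarrow> 'a) \<Rightarrow> 'a \<Rightarrow> 'a \<Rightarrow> bool" where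
  "is_A_LSS A1 B y x0 \<longleftrightarrow> (\<forall>x. seminormA A1 (y - B x0) \<le> seminormA A1 (y - B x))"

definition is_A_inverse :: "('a::complex_inner \<Rightarrow> 'a) \<Rightarrow> ('a \<Rightarrow> 'a) \<Rightarrow> ('a \<Rightarrow> 'a) \<Rightarrow> bool" where
  "is_A_inverse A1 B G \<longleftrightarrow> bounded_clinear_op G \<and> (\<forall>y. is_A_LSS A1 B y (G y))"

definition is_AA_inverse ::
  "('a::complex_inner \<Rightarrow> 'a) \<Rightarrow> ('a \<Rightarrow> 'a) \<Rightarrow> ('a \<Rightarrow> 'a) \<Rightarrow> ('a \<Rightarrow> 'a) \<Rightarrow> bool" where
  "is_AA_inverse A1 A2 B G \<longleftrightarrow> is_A_inverse A1 B G \<and>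
     (\<forall>y x0. is_A_LSS A1 B y x0 \<longrightarrow> seminormA A2 (G y) \<le> seminormA A2 x0)"

definition closed_csubspace :: "'a::complex_inner set \<Rightarrow> bool" where
  "closed_csubspace S \<longleftrightarrow> closed S \<and> 0 \<in> S \<and> (\<forall>x\<in>S. \<forall>y\<in>S. x + y \<in> S) \<and>
     (\<forall>c. \<forall>x\<in>S. c *\<^sub>C x \<in> S)"

definition compatible :: "('a::complex_inner \<Rightarrow> 'a) \<Rightarrow> 'a set \<Rightarrow> bool" where
  "compatible A S \<longleftrightarrow> positive_op A \<and> closed_csubspace S \<and>
     (\<exists>Q Qs. bounded_clinear_op Q \<and> Q \<circ> Q = Q \<and> range Q = S \<and>
             is_adjoint Q Qs \<and> A \<circ> Q = Qs \<circ> A)"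

end

theory Submission
  imports Defs
begin

text \<open>An \<open>A\<^sub>1\<close>-least squares solution of \<open>Bx = y\<close> is characterised by the normal equations:
  the residual \<open>y - Bx\<^sub>0\<close> is \<open>A\<^sub>1\<close>-orthogonal to \<open>R(B)\<close>. Given an \<open>A\<^sub>1A\<^sub>2\<close>-inverse \<open>G\<close>, the
  operators \<open>BG\<close> and \<open>I - GB\<close> map into \<open>R(B)\<close> and \<open>N(A\<^sub>1B)\<close> with \<open>A\<^sub>1\<close>- resp. \<open>A\<^sub>2\<close>-orthogonal
  residuals, and any such map can be corrected to an idempotent \<open>A\<close>-selfadjoint one, which
  witnesses compatibility (the adjoint exists by the Riesz representation theorem). Conversely,
  compatible projections \<open>Q\<^sub>1\<close> onto \<open>R(B)\<close> and \<open>Q\<^sub>2\<close> onto \<open>N(A\<^sub>1B)\<close> together with a bounded right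
  inverse of \<open>B\<close> on its closed range (obtained by a Baire category argument) assemble into an
  \<open>A\<^sub>1A\<^sub>2\<close>-inverse.\<close>

section \<open>Complex inner product spaces\<close>

lemma scaleC_zero_right [simp]: "c *\<^sub>C (0::'a::complex_inner) = 0"
  using scaleC_add_right[of c "0::'a" 0] by simp

lemma scaleC_minus_right: "c *\<^sub>C (- (x::'a::complex_inner)) = - (c *\<^sub>C x)"
  by (metis add.right_inverse add_eq_0_iff scaleC_add_right scaleC_zero_right)

lemma scaleC_diff_right: "c *\<^sub>C ((x::'a::complex_inner) - y) = c *\<^sub>C x - c *\<^sub>C y"
  by (simp only: diff_conv_add_uminus scaleC_add_right scaleC_minus_right)

lemma cinner_add_right: "cinner x (y + z) = cinner x y + cinner (x::'a::complex_inner) z"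
  by (subst (1 2 3) cinner_commute) (simp add: cinner_add_left)

lemma cinner_scaleC_right: "cinner x (c *\<^sub>C y) = cnj c * cinner (x::'a::complex_inner) y"
  by (subst (1 2) cinner_commute) (simp add: cinner_scaleC_left)

lemma cinner_zero_left [simp]: "cinner 0 (y::'a::complex_inner) = 0"
  using cinner_add_left[of "0::'a" 0 y] by simp

lemma cinner_zero_right [simp]: "cinner (y::'a::complex_inner) 0 = 0"
  using cinner_add_right[of y "0::'a" 0] by simp

lemma cinner_diff_left: "cinner (x - z) (y::'a::complex_inner) = cinner x y - cinner z y"
  by (metis add_diff_cancel_right' cinner_add_left diff_add_cancel)

lemma cinner_diff_right: "cinner y (x - z) = cinner y x - cinner (y::'a::complex_inner) z"
  by (metis add_diff_cancel_right' cinner_add_right diff_add_cancel)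

lemma cinner_self_eq_norm_square: "cinner x x = complex_of_real ((norm (x::'a::complex_inner))\<^sup>2)"
proof -
  obtain r where "cinner x x = of_real r"
    using cinner_self_real[of x] by (auto elim: Reals_cases)
  moreover have "(norm x)\<^sup>2 = Re (cinner x x)"
    using norm_eq_sqrt_cinner[of x] cinner_self_nonneg[of x] by simp
  ultimately show ?thesis by simp
qed

lemma Re_cinner_self: "Re (cinner x x) = (norm (x::'a::complex_inner))\<^sup>2"
  by (simp add: cinner_self_eq_norm_square)

lemma norm_scaleC: "norm (c *\<^sub>C (x::'a::complex_inner)) = cmod c * norm x"
proof -
  have "(norm (c *\<^sub>C x))\<^sup>2 = Re (cinner (c *\<^sub>C x) (c *\<^sub>C x))"
    by (simp add: Re_cinner_self)
  also have "\<dots> = Re (c * cnj c * cinner x x)"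
    by (simp add: cinner_scaleC_left cinner_scaleC_right algebra_simps)
  also have "\<dots> = (cmod c * norm x)\<^sup>2"
    by (simp add: cinner_self_eq_norm_square complex_mult_cnj cmod_power2 power_mult_distrib
        flip: of_real_mult)
  finally show ?thesis by (simp add: power2_eq_iff_nonneg)
qed

lemma bounded_clinear_op_imp_bounded_linear:
  assumes "bounded_clinear_op (T::'a::complex_inner \<Rightarrow> 'a)"
  shows "bounded_linear T"
proof
  show "T (x + y) = T x + T y" "T (r *\<^sub>R x) = r *\<^sub>R T x" for x y r
    using assms by (simp_all add: bounded_clinear_op_def scaleR_scaleC)
  show "\<exists>K. \<forall>x. norm (T x) \<le> norm x * K"
    using assms by (simp add: bounded_clinear_op_def)
qed

lemma bounded_clinear_opI:
  assumes "bounded_linear T" and "\<And>c x. T (c *\<^sub>C x) = c *\<^sub>C T x"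
  shows "bounded_clinear_op (T::'a::complex_inner \<Rightarrow> 'a)"
proof -
  obtain K where "\<forall>x. norm (T x) \<le> norm x * K"
    using bounded_linear.bounded[OF assms(1)] by blast
  then show ?thesis
    using assms by (auto simp: bounded_clinear_op_def linear_add[OF bounded_linear.linear[OF assms(1)]])
qed

context
  fixes T :: "'a::complex_inner \<Rightarrow> 'a"
  assumes T: "bounded_clinear_op T"
begin

lemma clinear_op_add: "T (x + y) = T x + T y"
  and clinear_op_scaleC: "T (c *\<^sub>C x) = c *\<^sub>C T x"
  using T by (simp_all add: bounded_clinear_op_def)

lemma clinear_op_zero: "T 0 = 0"
  and clinear_op_diff: "T (x - y) = T x - T y"
  using bounded_clinear_op_imp_bounded_linear[OF T]
  by (simp_all add: linear_0 linear_diff bounded_linear.linear)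

end

lemma bounded_clinear_op_ident: "bounded_clinear_op (\<lambda>x::'a::complex_inner. x)"
  unfolding bounded_clinear_op_def by (auto intro: exI[of _ 1])

lemma bounded_clinear_op_compose:
  assumes "bounded_clinear_op S" "bounded_clinear_op T"
  shows "bounded_clinear_op (\<lambda>x. S (T x))"
proof (rule bounded_clinear_opI)
  show "bounded_linear (\<lambda>x. S (T x))"
    using bounded_linear_compose[OF assms[THEN bounded_clinear_op_imp_bounded_linear]] .
qed (simp add: assms clinear_op_scaleC)

lemma bounded_clinear_op_add:
  assumes "bounded_clinear_op S" "bounded_clinear_op T"
  shows "bounded_clinear_op (\<lambda>x. S x + T x)"
proof (rule bounded_clinear_opI)
  show "bounded_linear (\<lambda>x. S x + T x)"
    using bounded_linear_add[OF assms[THEN bounded_clinear_op_imp_bounded_linear]] .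
qed (simp add: assms clinear_op_scaleC scaleC_add_right)

lemma bounded_clinear_op_sub:
  assumes "bounded_clinear_op S" "bounded_clinear_op T"
  shows "bounded_clinear_op (\<lambda>x. S x - T x)"
proof (rule bounded_clinear_opI)
  show "bounded_linear (\<lambda>x. S x - T x)"
    using bounded_linear_sub[OF assms[THEN bounded_clinear_op_imp_bounded_linear]] .
qed (simp add: assms clinear_op_scaleC scaleC_diff_right)

lemma closed_csubspace_kernel:
  assumes "bounded_clinear_op (T::'a::complex_inner \<Rightarrow> 'a)"
  shows "closed_csubspace {x. T x = 0}"
proof -
  have "closed {x. T x = 0}"
    using bounded_linear.continuous_on[OF bounded_clinear_op_imp_bounded_linear[OF assms] continuous_on_id]
    by (rule closed_Collect_eq[OF _ continuous_on_const])
  then show ?thesis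
    using assms by (simp add: closed_csubspace_def clinear_op_zero clinear_op_add clinear_op_scaleC)
qed

lemma closed_csubspace_range:
  assumes "bounded_clinear_op (T::'a::complex_inner \<Rightarrow> 'a)" and "closed (range T)"
  shows "closed_csubspace (range T)"
  unfolding closed_csubspace_def
proof (intro conjI ballI allI assms(2))
  show "0 \<in> range T" by (metis assms(1) clinear_op_zero rangeI)
  show "x + y \<in> range T" if "x \<in> range T" "y \<in> range T" for x y
    using that by (metis assms(1) clinear_op_add rangeE rangeI)
  show "c *\<^sub>C x \<in> range T" if "x \<in> range T" for c x
    using that by (metis assms(1) clinear_op_scaleC rangeE rangeI)
qed

lemma positive_op_bounded_clinear: "positive_op A \<Longrightarrow> bounded_clinear_op A"
  and positive_op_nonneg: "positive_op A \<Longrightarrow> 0 \<le> Re (cinner (A z) z)"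
  by (simp_all add: positive_op_def)

lemma positive_op_ident: "positive_op (\<lambda>x::'a::complex_inner. x)"
  by (simp add: positive_op_def bounded_clinear_op_ident cinner_self_real cinner_self_nonneg)

text \<open>Polarization: the quadratic form of a positive operator is real along the directions
  \<open>x + y\<close> and \<open>x + \<i> y\<close>, which forces \<open>\<langle>Ay,x\<rangle>\<close> to be the conjugate of \<open>\<langle>Ax,y\<rangle>\<close>.\<close>
lemma positive_op_hermitian:
  assumes A: "positive_op A"
  shows "cinner (A y) x = cnj (cinner (A x) y)"
proof -
  have B: "bounded_clinear_op A" using A by (rule positive_op_bounded_clinear)
  have real: "cinner (A z) z \<in> \<real>" for z using A by (simp add: positive_op_def)
  define a where "a = cinner (A x) y"
  define b where "b = cinner (A y) x"
  have expand: "cinner (A (x + w)) (x + w) = cinner (A x) x + (cinner (A x) w + cinner (A w) x)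
      + cinner (A w) w" for w
    by (simp add: clinear_op_add[OF B] cinner_add_left cinner_add_right)
  have "cinner (A x) y + cinner (A y) x \<in> \<real>"
    using expand[of y] real[of "x + y"] real[of x] real[of y]
    by (metis Reals_diff add_diff_cancel_left' add_diff_cancel_right')
  moreover have "cinner (A x) (\<i> *\<^sub>C y) + cinner (A (\<i> *\<^sub>C y)) x \<in> \<real>"
    using expand[of "\<i> *\<^sub>C y"] real[of "x + \<i> *\<^sub>C y"] real[of x] real[of "\<i> *\<^sub>C y"]
    by (metis Reals_diff add_diff_cancel_left' add_diff_cancel_right')
  ultimately have "a + b \<in> \<real>" "- \<i> * a + \<i> * b \<in> \<real>"
    by (simp_all add: a_def b_def clinear_op_scaleC[OF B] cinner_scaleC_left cinner_scaleC_right)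
  then have "b = cnj a" by (auto simp: complex_is_Real_iff complex_eq_iff)
  then show ?thesis by (simp add: a_def b_def)
qed

lemma positive_op_selfadjoint: "positive_op A \<Longrightarrow> cinner (A x) y = cinner x (A y)"
  by (metis cinner_commute positive_op_hermitian)

lemma positive_op_quadratic_add:
  assumes A: "positive_op A"
  shows "Re (cinner (A (u + v)) (u + v)) =
    Re (cinner (A u) u) + 2 * Re (cinner (A u) v) + Re (cinner (A v) v)"
  using positive_op_hermitian[OF A, of v u]
  by (simp add: clinear_op_add[OF positive_op_bounded_clinear[OF A]] cinner_add_left cinner_add_right)

lemma positive_op_quadratic_scaleC:
  assumes A: "positive_op A"
  shows "Re (cinner (A (c *\<^sub>C v)) (c *\<^sub>C v)) = (cmod c)\<^sup>2 * Re (cinner (A v) v)"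
proof -
  have "cinner (A (c *\<^sub>C v)) (c *\<^sub>C v) = (c * cnj c) * cinner (A v) v"
    by (simp add: clinear_op_scaleC[OF positive_op_bounded_clinear[OF A]] cinner_scaleC_left
        cinner_scaleC_right mult.assoc)
  then show ?thesis by (simp flip: complex_norm_square)
qed

text \<open>Moving from a minimiser \<open>u\<close> of the quadratic form in the direction \<open>-t\<langle>Au,v\<rangle>v\<close> lowers
  the form by \<open>t|\<langle>Au,v\<rangle>|\<^sup>2(2 - t\<langle>Av,v\<rangle>)\<close>, which is positive for small \<open>t > 0\<close>.\<close>
lemma positive_op_minimizer_orthogonal:
  assumes A: "positive_op A"
    and min: "\<And>c. Re (cinner (A u) u) \<le> Re (cinner (A (u + c *\<^sub>C v)) (u + c *\<^sub>C v))"
  shows "cinner (A u) v = 0"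
proof -
  define a where "a = cinner (A u) v"
  define q where "q = Re (cinner (A v) v)"
  define t where "t = 1 / (q + 1)"
  define w where "w = (- (complex_of_real t * a)) *\<^sub>C v"
  have q: "0 \<le> q" using positive_op_nonneg[OF A] by (simp add: q_def)
  have t: "0 < t" "t * q < 1" using q by (simp_all add: t_def field_simps)
  have "Re (cinner (A u) w) = - t * (cmod a)\<^sup>2"
    unfolding cmod_power2 by (simp add: w_def cinner_scaleC_right algebra_simps power2_eq_square flip: a_def)
  moreover have "Re (cinner (A w) w) = t\<^sup>2 * (cmod a)\<^sup>2 * q"
    using t by (simp add: w_def positive_op_quadratic_scaleC[OF A] norm_mult power_mult_distrib q_def)
  ultimately have "Re (cinner (A (u + w)) (u + w)) = Re (cinner (A u) u) + t * (cmod a)\<^sup>2 * (t * q - 2)"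
    by (simp add: positive_op_quadratic_add[OF A] algebra_simps power2_eq_square)
  then have "0 \<le> t * (cmod a)\<^sup>2 * (t * q - 2)"
    using min[of "- (complex_of_real t * a)"] by (simp add: w_def)
  then have "t * (cmod a)\<^sup>2 \<le> 0"
    using t by (simp add: zero_le_mult_iff)
  then show ?thesis
    using t(1) by (simp add: a_def mult_le_0_iff)
qed

lemma positive_op_quadratic_eq_0:
  assumes A: "positive_op A" and d: "Re (cinner (A d) d) = 0"
  shows "A d = 0"
proof -
  have "cinner (A d) w = 0" for w
    using A d by (intro positive_op_minimizer_orthogonal) (simp_all add: positive_op_nonneg)
  then show ?thesis by (metis cinner_self_eq_0)
qed

section \<open>Orthogonal projections\<close>

lemma closed_csubspace_add: "closed_csubspace M \<Longrightarrow> x \<in> M \<Longrightarrow> y \<in> M \<Longrightarrow> x + y \<in> M"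
  and closed_csubspace_scaleC: "closed_csubspace M \<Longrightarrow> x \<in> M \<Longrightarrow> c *\<^sub>C x \<in> M"
  and closed_csubspace_scaleR: "closed_csubspace M \<Longrightarrow> x \<in> M \<Longrightarrow> r *\<^sub>R x \<in> M"
  by (simp_all add: closed_csubspace_def scaleR_scaleC)

lemma closed_csubspace_diff: "closed_csubspace M \<Longrightarrow> x \<in> M \<Longrightarrow> y \<in> M \<Longrightarrow> x - y \<in> M"
  using closed_csubspace_add closed_csubspace_scaleR[of M y "-1"] by (metis diff_conv_add_uminus scaleR_minus1_left)

lemma closed_csubspace_convex: "closed_csubspace M \<Longrightarrow> convex M"
  by (simp add: convex_def closed_csubspace_add closed_csubspace_scaleR)

lemma cinner_parallelogram_law:
  "(norm (a + b))\<^sup>2 + (norm (a - b))\<^sup>2 = 2 * (norm a)\<^sup>2 + 2 * (norm (b::'a::complex_inner))\<^sup>2"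
proof -
  have "cinner a (- b) = - cinner a b"
    using cinner_diff_right[of a 0 b] by simp
  then show ?thesis
    using positive_op_quadratic_add[OF positive_op_ident, of a b]
      positive_op_quadratic_add[OF positive_op_ident, of a "- b"]
    by (simp add: Re_cinner_self)
qed

lemma norm_diff_square_le_infdist:
  fixes x :: "'a::complex_inner"
  assumes M: "convex M" and a: "a \<in> M" and b: "b \<in> M"
  shows "(norm (a - b))\<^sup>2 \<le> 2 * (norm (x - a))\<^sup>2 + 2 * (norm (x - b))\<^sup>2 - 4 * (infdist x M)\<^sup>2"
proof -
  define m where "m = (1/2) *\<^sub>R a + (1/2) *\<^sub>R b"
  have "m \<in> M" unfolding m_def by (rule convexD[OF M a b]) simp_all
  then have "infdist x M \<le> norm (x - m)" by (metis infdist_le dist_norm)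
  then have "4 * (infdist x M)\<^sup>2 \<le> (norm (2 *\<^sub>R (x - m)))\<^sup>2"
    by (simp add: power_mult_distrib power_mono infdist_nonneg)
  moreover have "2 *\<^sub>R (x - m) = (x - a) + (x - b)"
    by (simp add: m_def algebra_simps scaleR_2)
  moreover have "(norm ((x - a) - (x - b)))\<^sup>2 = (norm (a - b))\<^sup>2"
    using norm_minus_commute[of b a] by simp
  ultimately show ?thesis
    using cinner_parallelogram_law[of "x - a" "x - b"] by simp
qed

theorem nearest_point_exists:
  fixes x :: "'a::{complex_inner,complete_space}"
  assumes closed: "closed M" and convex: "convex M" and nonempty: "M \<noteq> {}"
  obtains m where "m \<in> M" "\<And>m'. m' \<in> M \<Longrightarrow> norm (x - m) \<le> norm (x - m')"
proof -
  define \<delta> where "\<delta> = infdist x M"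
  have "\<exists>m\<in>M. dist x m < \<delta> + inverse (real (Suc n))" for n
  proof -
    have "Inf ((\<lambda>m. dist x m) ` M) < \<delta> + inverse (real (Suc n))"
      using nonempty by (simp add: \<delta>_def infdist_notempty)
    then show ?thesis
      using nonempty by (auto dest!: cInf_lessD[rotated])
  qed
  then obtain s where s: "\<And>n. s n \<in> M" "\<And>n. dist x (s n) < \<delta> + inverse (real (Suc n))"
    by metis
  have "(\<lambda>n. dist x (s n)) \<longlonglongrightarrow> \<delta>"
  proof (rule tendsto_sandwich[OF _ _ tendsto_const])
    show "\<forall>\<^sub>F n in sequentially. \<delta> \<le> dist x (s n)"
      using s(1) by (simp add: \<delta>_def infdist_le)
    show "\<forall>\<^sub>F n in sequentially. dist x (s n) \<le> \<delta> + inverse (real (Suc n))"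
      using s(2) by (simp add: less_imp_le)
    show "(\<lambda>n. \<delta> + inverse (real (Suc n))) \<longlonglongrightarrow> \<delta>"
      using tendsto_add[OF tendsto_const LIMSEQ_inverse_real_of_nat] by simp
  qed
  then have "(\<lambda>n. 2 * (dist x (s n))\<^sup>2 - 2 * \<delta>\<^sup>2) \<longlonglongrightarrow> 2 * \<delta>\<^sup>2 - 2 * \<delta>\<^sup>2"
    by (intro tendsto_intros)
  then have excess: "(\<lambda>n. 2 * (norm (x - s n))\<^sup>2 - 2 * \<delta>\<^sup>2) \<longlonglongrightarrow> 0"
    by (simp add: dist_norm)
  have "Cauchy s"
  proof (rule metric_CauchyI)
    fix e :: real assume "0 < e"
    then obtain N where N: "\<And>n. N \<le> n \<Longrightarrow> 2 * (norm (x - s n))\<^sup>2 - 2 * \<delta>\<^sup>2 < e\<^sup>2 / 2"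
      using order_tendstoD(2)[OF excess, of "e\<^sup>2 / 2"] by (auto simp: eventually_sequentially)
    have "dist (s m) (s n) < e" if "N \<le> m" "N \<le> n" for m n
    proof -
      have "(norm (s m - s n))\<^sup>2 < e\<^sup>2"
        using norm_diff_square_le_infdist[OF convex s(1) s(1), of m n x] N[OF that(1)] N[OF that(2)]
        by (simp add: \<delta>_def)
      then show ?thesis
        using \<open>0 < e\<close> by (simp add: dist_norm power_less_imp_less_base)
    qed
    then show "\<exists>N. \<forall>m\<ge>N. \<forall>n\<ge>N. dist (s m) (s n) < e" by blast
  qed
  then obtain m where m: "s \<longlonglongrightarrow> m"
    using Cauchy_convergent convergent_def by blast
  have "m \<in> M"
    using closed_sequentially[OF closed] s(1) m by blast
  moreover have "dist x m = \<delta>"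
    using LIMSEQ_unique[OF tendsto_dist[OF tendsto_const m]] \<open>(\<lambda>n. dist x (s n)) \<longlonglongrightarrow> \<delta>\<close> by blast
  ultimately show ?thesis
    using that by (metis \<delta>_def dist_norm infdist_le)
qed

lemma orthogonal_decomposition_exists:
  fixes x :: "'a::{complex_inner,complete_space}"
  assumes M: "closed_csubspace M"
  shows "\<exists>m\<in>M. \<forall>v\<in>M. cinner (x - m) v = 0"
proof -
  obtain m where m: "m \<in> M" and near: "\<And>m'. m' \<in> M \<Longrightarrow> norm (x - m) \<le> norm (x - m')"
    using nearest_point_exists[of M x] M closed_csubspace_convex
    by (metis closed_csubspace_def empty_iff)
  have "cinner (x - m) v = 0" if v: "v \<in> M" for v
  proof (rule positive_op_minimizer_orthogonal[OF positive_op_ident])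
    fix c
    have "m - c *\<^sub>C v \<in> M"
      using M m v by (simp add: closed_csubspace_diff closed_csubspace_scaleC)
    then have "(norm (x - m))\<^sup>2 \<le> (norm (x - (m - c *\<^sub>C v)))\<^sup>2"
      by (simp add: near power_mono)
    then show "Re (cinner (x - m) (x - m)) \<le> Re (cinner (x - m + c *\<^sub>C v) (x - m + c *\<^sub>C v))"
      by (simp add: Re_cinner_self algebra_simps)
  qed
  then show ?thesis using m by blast
qed

definition orth_proj :: "'a::complex_inner set \<Rightarrow> 'a \<Rightarrow> 'a" where
  "orth_proj M x = (SOME m. m \<in> M \<and> (\<forall>v\<in>M. cinner (x - m) v = 0))"

context
  fixes M :: "'a::{complex_inner,complete_space} set"
  assumes M: "closed_csubspace M"
begin

lemma orth_proj_in: "orth_proj M x \<in> M"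
  and orth_proj_orthogonal: "v \<in> M \<Longrightarrow> cinner (x - orth_proj M x) v = 0"
  using someI_ex[OF orthogonal_decomposition_exists[OF M, of x, unfolded Bex_def]]
  unfolding orth_proj_def by blast+

lemma orth_proj_unique:
  assumes m: "m \<in> M" and orth: "\<And>v. v \<in> M \<Longrightarrow> cinner (x - m) v = 0"
  shows "orth_proj M x = m"
proof -
  define p where "p = orth_proj M x"
  have pm: "p - m \<in> M" using closed_csubspace_diff[OF M orth_proj_in m] by (simp add: p_def)
  have "cinner (p - m) (p - m) = cinner ((x - m) - (x - p)) (p - m)"
    by simp
  also have "\<dots> = cinner (x - m) (p - m) - cinner (x - p) (p - m)"
    by (rule cinner_diff_left)
  also have "\<dots> = 0" using orth[OF pm] orth_proj_orthogonal[OF pm, of x] by (simp add: p_def)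
  finally show ?thesis by (simp add: cinner_self_eq_0 p_def)
qed

lemma orth_proj_fixed: "m \<in> M \<Longrightarrow> orth_proj M m = m"
  by (rule orth_proj_unique) simp_all

lemma orth_proj_Pythagoras: "(norm x)\<^sup>2 = (norm (orth_proj M x))\<^sup>2 + (norm (x - orth_proj M x))\<^sup>2"
proof -
  define p where "p = orth_proj M x"
  have "cinner p (x - p) = 0"
    using orth_proj_orthogonal[OF orth_proj_in, of x] cinner_commute[of p "x - p"] by (simp add: p_def)
  then show ?thesis
    using positive_op_quadratic_add[OF positive_op_ident, of p "x - p"] by (simp add: Re_cinner_self p_def)
qed

lemma norm_orth_proj_le: "norm (orth_proj M x) \<le> norm x"
  and norm_diff_orth_proj_le: "norm (x - orth_proj M x) \<le> norm x"
  using orth_proj_Pythagoras[of x] by (simp_all add: power2_le_imp_le)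

lemma orth_proj_bounded_clinear: "bounded_clinear_op (orth_proj M)"
  unfolding bounded_clinear_op_def
proof (intro conjI allI exI)
  show "orth_proj M (x + y) = orth_proj M x + orth_proj M y" for x y
  proof (rule orth_proj_unique[OF closed_csubspace_add[OF M orth_proj_in orth_proj_in]])
    fix v assume "v \<in> M"
    have "x + y - (orth_proj M x + orth_proj M y) = (x - orth_proj M x) + (y - orth_proj M y)"
      by simp
    then show "cinner (x + y - (orth_proj M x + orth_proj M y)) v = 0"
      using orth_proj_orthogonal[OF \<open>v \<in> M\<close>] by (simp only: cinner_add_left) simp
  qed
  show "orth_proj M (c *\<^sub>C x) = c *\<^sub>C orth_proj M x" for c x
    using orth_proj_orthogonal[of _ x]
    by (intro orth_proj_unique closed_csubspace_scaleC[OF M orth_proj_in])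
       (simp add: cinner_scaleC_left flip: scaleC_diff_right)
  show "norm (orth_proj M x) \<le> norm x * 1" for x
    by (simp add: norm_orth_proj_le)
qed

end

section \<open>Riesz representation and adjoints\<close>

theorem Riesz_representation:
  fixes \<phi> :: "'a::{complex_inner,complete_space} \<Rightarrow> complex"
  assumes add: "\<And>x y. \<phi> (x + y) = \<phi> x + \<phi> y"
    and scaleC: "\<And>c x. \<phi> (c *\<^sub>C x) = c * \<phi> x"
    and bounded: "\<And>x. cmod (\<phi> x) \<le> norm x * K"
  obtains z where "\<And>x. \<phi> x = cinner x z"
proof -
  have lin: "bounded_linear \<phi>"
  proof
    show "\<phi> (r *\<^sub>R x) = r *\<^sub>R \<phi> x" for r x
      by (simp add: scaleR_scaleC scaleC scaleR_conv_of_real)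
  qed (use add bounded in auto)
  define N where "N = {x. \<phi> x = 0}"
  have N: "closed_csubspace N"
  proof -
    have "closed N"
      unfolding N_def using bounded_linear.continuous_on[OF lin continuous_on_id]
      by (rule closed_Collect_eq[OF _ continuous_on_const])
    then show ?thesis
      using add scaleC linear_0[OF bounded_linear.linear[OF lin]]
      by (simp add: closed_csubspace_def N_def)
  qed
  show ?thesis
  proof (cases "\<forall>x. \<phi> x = 0")
    case True
    then show ?thesis using that[of 0] by simp
  next
    case False
    then obtain x0 where x0: "\<phi> x0 \<noteq> 0" by blast
    define w where "w = x0 - orth_proj N x0"
    have "\<phi> (orth_proj N x0) = 0" using orth_proj_in[OF N] by (simp add: N_def)
    then have "\<phi> w = \<phi> x0"
      unfolding w_def using linear_diff[OF bounded_linear.linear[OF lin]] by simp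
    then have "w \<noteq> 0" using x0 linear_0[OF bounded_linear.linear[OF lin]] by auto
    then have ww: "cinner w w \<noteq> 0" by (simp add: cinner_self_eq_0)
    text \<open>\<open>\<phi> x w - \<phi> w x\<close> lies in the kernel, to which \<open>w\<close> is orthogonal.\<close>
    have key: "\<phi> x * cinner w w = \<phi> w * cinner x w" for x
    proof -
      have "\<phi> (\<phi> x *\<^sub>C w - \<phi> w *\<^sub>C x) = 0"
        using linear_diff[OF bounded_linear.linear[OF lin]] by (simp add: scaleC)
      then have "cinner w (\<phi> x *\<^sub>C w - \<phi> w *\<^sub>C x) = 0"
        using orth_proj_orthogonal[OF N, of _ x0] by (simp add: w_def N_def)
      then have "cinner (\<phi> x *\<^sub>C w - \<phi> w *\<^sub>C x) w = 0"
        using cinner_commute by (metis complex_cnj_zero)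
      then show ?thesis by (simp add: cinner_diff_left cinner_scaleC_left)
    qed
    show ?thesis
    proof (rule that)
      show "\<phi> x = cinner x (cnj (\<phi> w / cinner w w) *\<^sub>C w)" for x
        using key[of x] ww by (simp add: cinner_scaleC_right field_simps)
    qed
  qed
qed

lemma cinner_Cauchy_Schwarz: "cmod (cinner x y) \<le> norm x * norm (y::'a::complex_inner)"
proof (cases "y = 0")
  case False
  define a where "a = cinner x y"
  define n where "n = (norm y)\<^sup>2"
  define t where "t = 1 / n"
  define w where "w = (- (complex_of_real t * a)) *\<^sub>C y"
  have n: "0 < n" using False by (simp add: n_def)
  then have t: "0 < t" "t * n = 1" by (simp_all add: t_def)
  have "Re (cinner x w) = - t * (cmod a)\<^sup>2"
    unfolding cmod_power2 by (simp add: w_def cinner_scaleC_right algebra_simps power2_eq_square flip: a_def)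
  moreover have "Re (cinner w w) = t * (cmod a)\<^sup>2 * (t * n)"
    using t by (simp add: w_def Re_cinner_self norm_scaleC norm_mult power_mult_distrib n_def
        power2_eq_square mult_ac)
  ultimately have "(norm (x + w))\<^sup>2 = (norm x)\<^sup>2 - t * (cmod a)\<^sup>2"
    using positive_op_quadratic_add[OF positive_op_ident, of x w] t(2) by (simp add: Re_cinner_self)
  then have "0 \<le> (norm x)\<^sup>2 - t * (cmod a)\<^sup>2"
    by (metis zero_le_power2)
  then have "(cmod a)\<^sup>2 \<le> (norm x * norm y)\<^sup>2"
    using n by (simp add: t_def n_def power_mult_distrib field_simps)
  then show ?thesis
    by (simp add: a_def power2_le_iff_abs_le)
qed simp

lemma adjoint_exists:
  fixes T :: "'a::{complex_inner,complete_space} \<Rightarrow> 'a"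
  assumes T: "bounded_clinear_op T"
  obtains Ts where "is_adjoint T Ts"
proof -
  obtain K where K: "\<And>x. norm (T x) \<le> norm x * K"
    using T by (auto simp: bounded_clinear_op_def)
  have "\<exists>z. \<forall>x. cinner (T x) y = cinner x z" for y
  proof -
    have "cmod (cinner (T x) y) \<le> norm x * (K * norm y)" for x
      using cinner_Cauchy_Schwarz[of "T x" y] mult_right_mono[OF K[of x] norm_ge_zero[of y]]
      by (simp add: mult.assoc)
    then obtain z where "\<And>x. cinner (T x) y = cinner x z"
      by (rule Riesz_representation[of "\<lambda>x. cinner (T x) y", rotated 2])
         (simp_all add: clinear_op_add[OF T] clinear_op_scaleC[OF T] cinner_add_left cinner_scaleC_left)
    then show ?thesis by blast
  qed
  then obtain Ts where "\<forall>y x. cinner (T x) y = cinner x (Ts y)" by metis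
  then show ?thesis using that by (auto simp: is_adjoint_def)
qed

section \<open>Bounded preimages for operators with closed range\<close>

lemma dist_le_geometric_tail:
  fixes s :: "nat \<Rightarrow> 'a::metric_space"
  assumes step: "\<And>n. dist (s n) (s (Suc n)) \<le> C * q ^ n" and q: "q < 1" and "n \<le> m"
  shows "dist (s n) (s m) \<le> C * (q ^ n - q ^ m) / (1 - q)"
  using \<open>n \<le> m\<close>
proof (induction m rule: dec_induct)
  case (step m)
  have "dist (s n) (s (Suc m)) \<le> dist (s n) (s m) + dist (s m) (s (Suc m))"
    by (rule dist_triangle)
  also have "\<dots> \<le> C * (q ^ n - q ^ m) / (1 - q) + C * q ^ m"
    using step.IH assms(1)[of m] by linarith
  also have "\<dots> = C * (q ^ n - q ^ Suc m) / (1 - q)"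
    using q by (simp add: field_simps)
  finally show ?case .
qed simp

lemma Cauchy_if_dist_Suc_le_geometric:
  fixes s :: "nat \<Rightarrow> 'a::metric_space"
  assumes step: "\<And>n. dist (s n) (s (Suc n)) \<le> C * q ^ n" and q: "0 \<le> q" "q < 1"
  shows "Cauchy s"
proof (rule metric_CauchyI)
  fix e :: real assume "0 < e"
  have C: "0 \<le> C" using step[of 0] by (metis dual_order.trans mult.right_neutral power_0 zero_le_dist)
  have "(\<lambda>N. C * q ^ N / (1 - q)) \<longlonglongrightarrow> C * 0 / (1 - q)"
    using q by (intro tendsto_intros LIMSEQ_power_zero) auto
  then obtain N where N: "C * q ^ N / (1 - q) < e"
    using order_tendstoD(2)[of _ 0 sequentially e] \<open>0 < e\<close> eventually_sequentially by force
  have "dist (s m) (s n) < e" if "N \<le> m" "m \<le> n" for m n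
  proof -
    have "dist (s m) (s n) \<le> C * (q ^ m - q ^ n) / (1 - q)"
      using dist_le_geometric_tail[OF step q(2) that(2)] .
    also have "\<dots> \<le> C * q ^ N / (1 - q)"
    proof -
      have "q ^ m - q ^ n \<le> q ^ N"
        using q power_decreasing[OF that(1), of q] zero_le_power[of q n] by linarith
      then show ?thesis using q C by (intro divide_right_mono mult_left_mono) auto
    qed
    finally show ?thesis using N by linarith
  qed
  then have "dist (s m) (s n) < e" if "N \<le> m" "N \<le> n" for m n
    using that by (metis dist_commute nle_le)
  then show "\<exists>N. \<forall>m\<ge>N. \<forall>n\<ge>N. dist (s m) (s n) < e" by blast
qed

text \<open>Successive approximation: correcting the residual \<open>y - T x\<^sub>n\<close> by an approximate preimage
  halves it at each step, and the corrections form a geometric Cauchy sequence.\<close>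
lemma exact_preimage_from_halving_preimages:
  fixes T :: "'a::{real_normed_vector,complete_space} \<Rightarrow> 'b::real_normed_vector"
  assumes T: "bounded_linear T" and c: "0 \<le> c"
    and approx: "\<And>z. z \<in> range T \<Longrightarrow> \<exists>x. norm x \<le> c * norm z \<and> norm (T x - z) \<le> norm z / 2"
    and y: "y \<in> range T"
  obtains x where "T x = y" "norm x \<le> 2 * c * norm y"
proof -
  have lin: "linear T" using T by (rule bounded_linear.linear)
  obtain f where f: "\<And>z. z \<in> range T \<Longrightarrow> norm (f z) \<le> c * norm z \<and> norm (T (f z) - z) \<le> norm z / 2"
    using approx by metis
  define s where "s = rec_nat 0 (\<lambda>_ x. x + f (y - T x))"
  define r where "r n = y - T (s n)" for n
  have s_Suc: "s (Suc n) = s n + f (r n)" for n by (simp add: s_def r_def)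
  have r_range: "r n \<in> range T" for n
    using y by (auto simp: r_def linear_diff[OF lin, symmetric])
  have r_Suc: "r (Suc n) = r n - T (f (r n))" for n
    by (simp add: r_def s_Suc linear_add[OF lin])
  have r_bound: "norm (r n) \<le> norm y * (1/2) ^ n" for n
  proof (induction n)
    case 0 then show ?case by (simp add: r_def s_def linear_0[OF lin])
  next
    case (Suc n)
    have "norm (r (Suc n)) \<le> norm (r n) / 2"
      using f[OF r_range] by (simp add: r_Suc norm_minus_commute)
    then show ?case using Suc.IH by simp
  qed
  have step: "dist (s n) (s (Suc n)) \<le> c * norm y * (1/2) ^ n" for n
  proof -
    have "dist (s n) (s (Suc n)) \<le> c * norm (r n)"
      using f[OF r_range] by (simp add: s_Suc dist_norm)
    also have "\<dots> \<le> c * norm y * (1/2) ^ n"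
      using r_bound[of n] c by (simp add: mult_left_mono mult.assoc)
    finally show ?thesis .
  qed
  obtain x where x: "s \<longlonglongrightarrow> x"
    using Cauchy_if_dist_Suc_le_geometric[OF step] Cauchy_convergent convergent_def by fastforce
  have "r \<longlonglongrightarrow> 0"
  proof (rule Lim_null_comparison)
    show "\<forall>\<^sub>F n in sequentially. norm (r n) \<le> norm y * (1/2) ^ n" using r_bound by simp
    show "(\<lambda>n. norm y * (1/2::real) ^ n) \<longlonglongrightarrow> 0"
      by (intro tendsto_mult_right_zero LIMSEQ_power_zero) simp
  qed
  then have "(\<lambda>n. T (s n)) \<longlonglongrightarrow> y"
    using tendsto_diff[OF tendsto_const, of r 0 _ y] by (simp add: r_def)
  then have "T x = y"
    using LIMSEQ_unique bounded_linear.tendsto[OF T x] by blast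
  moreover have "norm x \<le> 2 * c * norm y"
  proof (rule LIMSEQ_le_const2[OF tendsto_norm[OF x]], intro exI allI impI)
    fix n
    have "norm (s n) = dist (s 0) (s n)" by (simp add: s_def dist_norm)
    also have "\<dots> \<le> c * norm y * (1 - (1/2) ^ n) / (1 - 1/2)"
      using dist_le_geometric_tail[OF step, of 0 n] by simp
    also have "\<dots> \<le> 2 * c * norm y"
      using c by (simp add: mult_left_le mult_left_mono)
    finally show "norm (s n) \<le> 2 * c * norm y" .
  qed
  ultimately show ?thesis using that by blast
qed

lemma closed_range_Baire:
  fixes T :: "'a::real_normed_vector \<Rightarrow> 'b::complete_space"
  assumes closed: "closed (range T)"
  obtains \<epsilon> y0 n where "0 < \<epsilon>" "y0 \<in> range T"
    "\<And>y. y \<in> range T \<Longrightarrow> dist y y0 < \<epsilon> \<Longrightarrow> y \<in> closure (T ` cball 0 (real n))"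
proof -
  let ?Y = "range T"
  define F where "F n = ?Y \<inter> closure (T ` cball 0 (real n))" for n :: nat
  have cover: "\<Union>(range F) = ?Y"
  proof
    show "?Y \<subseteq> \<Union>(range F)"
    proof
      fix y assume "y \<in> ?Y"
      then obtain x where x: "y = T x" by blast
      obtain n :: nat where "norm x \<le> real n" using real_arch_simple by blast
      then have "y \<in> F n" using x closure_subset[of "T ` cball 0 (real n)"] by (auto simp: F_def)
      then show "y \<in> \<Union>(range F)" by blast
    qed
  qed (auto simp: F_def)
  have "\<exists>n. top_of_set ?Y interior_of F n \<noteq> {}"
  proof (rule ccontr)
    assume "\<nexists>n. top_of_set ?Y interior_of F n \<noteq> {}"
    moreover have "completely_metrizable_space (top_of_set ?Y)"
      using closed_closedin[THEN iffD1, OF closed]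
      by (rule completely_metrizable_space_closedin[OF completely_metrizable_space_euclidean])
    moreover have "closedin (top_of_set ?Y) (F n)" for n
      unfolding F_def by (rule closedin_closed_Int) simp
    ultimately have "top_of_set ?Y interior_of \<Union>(range F) = {}"
      by (intro Baire_category_alt) auto
    then show False using cover interior_of_topspace[of "top_of_set ?Y"] by simp
  qed
  then obtain n y0 U where U: "openin (top_of_set ?Y) U" "y0 \<in> U" "U \<subseteq> F n"
    unfolding interior_of_def by blast
  then obtain \<epsilon> where "\<epsilon> > 0" and "\<forall>y\<in>?Y. dist y y0 < \<epsilon> \<longrightarrow> y \<in> U"
    using openin_euclidean_subtopology_iff[of ?Y U] by blast
  then have "\<forall>y\<in>?Y. dist y y0 < \<epsilon> \<longrightarrow> y \<in> closure (T ` cball 0 (real n))"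
    using U(3) unfolding F_def by blast
  moreover have "y0 \<in> ?Y" using U(2,3) unfolding F_def by blast
  ultimately show ?thesis
    using that \<open>\<epsilon> > 0\<close> by blast
qed

text \<open>Differences of two points of the ball \<open>T`cball 0 n\<close>, one near \<open>y\<^sub>0 + y\<close> and one near
  \<open>y\<^sub>0\<close>, approximate every small \<open>y\<close>; rescaling gives approximate preimages of controlled norm.\<close>
lemma closed_range_halving_preimages:
  fixes T :: "'a::real_normed_vector \<Rightarrow> 'b::{real_normed_vector,complete_space}"
  assumes lin: "linear T" and closed: "closed (range T)"
  obtains c where "0 \<le> c" "\<And>y. y \<in> range T \<Longrightarrow> \<exists>x. norm x \<le> c * norm y \<and> norm (T x - y) \<le> norm y / 2"
proof -
  obtain \<epsilon> y0 n where \<epsilon>: "0 < \<epsilon>" and y0: "y0 \<in> range T"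
    and ball: "\<And>y. y \<in> range T \<Longrightarrow> dist y y0 < \<epsilon> \<Longrightarrow> y \<in> closure (T ` cball 0 (real n))"
    using closed_range_Baire[OF closed] by blast
  have small: "\<exists>x. norm x \<le> 2 * real n \<and> norm (T x - y) < \<eta>"
    if y: "y \<in> range T" "norm y < \<epsilon>" and \<eta>: "0 < \<eta>" for y \<eta>
  proof -
    have "y0 + y \<in> range T"
      using y0 y by (auto simp flip: linear_add[OF lin])
    then have "y0 + y \<in> closure (T ` cball 0 (real n))"
      using y by (intro ball) (simp_all add: dist_norm)
    then obtain ya where "ya \<in> T ` cball 0 (real n)" "dist ya (y0 + y) < \<eta> / 2"
      using \<eta> unfolding closure_approachable by (meson half_gt_zero)
    then obtain a where a: "norm a \<le> real n" "norm (T a - (y0 + y)) < \<eta> / 2"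
      by (auto simp: dist_norm)
    have "y0 \<in> closure (T ` cball 0 (real n))"
      using ball[OF y0] \<epsilon> by simp
    then obtain yb where "yb \<in> T ` cball 0 (real n)" "dist yb y0 < \<eta> / 2"
      using \<eta> unfolding closure_approachable by (meson half_gt_zero)
    then obtain b where b: "norm b \<le> real n" "norm (T b - y0) < \<eta> / 2"
      by (auto simp: dist_norm)
    have "T (a - b) - y = (T a - (y0 + y)) - (T b - y0)"
      using linear_diff[OF lin] by simp
    then have "norm (T (a - b) - y) \<le> norm (T a - (y0 + y)) + norm (T b - y0)"
      by (metis norm_triangle_ineq4)
    then have "norm (T (a - b) - y) < \<eta>"
      using a(2) b(2) by simp
    moreover have "norm (a - b) \<le> 2 * real n"
      using a(1) b(1) norm_triangle_ineq4[of a b] by linarith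
    ultimately show ?thesis by blast
  qed
  define c where "c = 4 * real n / \<epsilon>"
  have "\<exists>x. norm x \<le> c * norm y \<and> norm (T x - y) \<le> norm y / 2" if y: "y \<in> range T" for y
  proof (cases "y = 0")
    case True
    then show ?thesis using linear_0[OF lin] by (auto intro!: exI[of _ 0])
  next
    case False
    define s where "s = \<epsilon> / (2 * norm y)"
    have s: "0 < s" "norm (s *\<^sub>R y) < \<epsilon>"
      using False \<epsilon> by (simp_all add: s_def)
    have "s *\<^sub>R y \<in> range T"
      using y by (auto simp flip: linear_scale[OF lin])
    moreover have "0 < s * (norm y / 2)"
      using s(1) False by simp
    ultimately obtain x where x: "norm x \<le> 2 * real n" "norm (T x - s *\<^sub>R y) < s * (norm y / 2)"
      using small s(2) by blast
    have "norm ((1 / s) *\<^sub>R x) \<le> c * norm y"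
      using x(1) s(1) False \<epsilon> by (simp add: c_def s_def field_simps)
    moreover have "T ((1 / s) *\<^sub>R x) - y = (1 / s) *\<^sub>R (T x - s *\<^sub>R y)"
      using s(1) by (simp add: linear_scale[OF lin] scaleR_diff_right)
    then have "norm (T ((1 / s) *\<^sub>R x) - y) \<le> norm y / 2"
      using x(2) s(1) by (simp add: divide_le_eq mult.commute)
    ultimately show ?thesis by blast
  qed
  moreover have "0 \<le> c" using \<epsilon> by (simp add: c_def)
  ultimately show ?thesis using that by blast
qed

theorem closed_range_bounded_preimages:
  fixes T :: "'a::{real_normed_vector,complete_space} \<Rightarrow> 'b::{real_normed_vector,complete_space}"
  assumes T: "bounded_linear T" and closed: "closed (range T)"
  obtains C where "0 \<le> C" "\<And>y. y \<in> range T \<Longrightarrow> \<exists>x. T x = y \<and> norm x \<le> C * norm y"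
proof -
  obtain c where c: "0 \<le> c"
    and approx: "\<And>y. y \<in> range T \<Longrightarrow> \<exists>x. norm x \<le> c * norm y \<and> norm (T x - y) \<le> norm y / 2"
    using closed_range_halving_preimages[OF bounded_linear.linear[OF T] closed] by blast
  show ?thesis
  proof (rule that[of "2 * c"])
    show "\<exists>x. T x = y \<and> norm x \<le> 2 * c * norm y" if "y \<in> range T" for y
      using exact_preimage_from_halving_preimages[OF T c approx that] by metis
  qed (use c in simp)
qed

lemma bounded_clinear_right_inverse:
  fixes B :: "'a::{complex_inner,complete_space} \<Rightarrow> 'a"
  assumes B: "bounded_clinear_op B" and closed: "closed (range B)"
  obtains R where "bounded_clinear_op R" "\<And>z. z \<in> range B \<Longrightarrow> B (R z) = z"
proof -
  obtain C where C: "0 \<le> C" and preimage: "\<And>y. y \<in> range B \<Longrightarrow> \<exists>x. B x = y \<and> norm x \<le> C * norm y"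
    using closed_range_bounded_preimages[OF bounded_clinear_op_imp_bounded_linear[OF B] closed] by blast
  define K where "K = {x. B x = 0}"
  have K: "closed_csubspace K" unfolding K_def by (rule closed_csubspace_kernel[OF B])
  have ran: "closed_csubspace (range B)" by (rule closed_csubspace_range[OF B closed])
  text \<open>\<open>L\<close> picks the preimage orthogonal to the kernel, which depends on \<open>B x\<close> only.\<close>
  define L where "L x = x - orth_proj K x" for x
  have L: "bounded_clinear_op L"
    unfolding L_def by (intro bounded_clinear_op_sub bounded_clinear_op_ident orth_proj_bounded_clinear[OF K])
  have BL: "B (L x) = B x" for x
    using orth_proj_in[OF K, of x] by (simp add: L_def K_def clinear_op_diff[OF B])
  have L_eq: "L x = L x'" if "B x = B x'" for x x'
  proof -
    have "x - x' \<in> K" using that by (simp add: K_def clinear_op_diff[OF B])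
    then have "L (x - x') = 0" by (simp add: L_def orth_proj_fixed[OF K])
    then show ?thesis by (simp add: clinear_op_diff[OF L])
  qed
  define P where "P = orth_proj (range B)"
  have P: "bounded_clinear_op P" unfolding P_def by (rule orth_proj_bounded_clinear[OF ran])
  define pre where "pre z = (SOME x. B x = P z)" for z
  have B_pre: "B (pre z) = P z" for z
    using orth_proj_in[OF ran, of z] unfolding pre_def P_def by (metis (mono_tags) rangeE someI_ex)
  define R where "R z = L (pre z)" for z
  have "bounded_clinear_op R"
    unfolding bounded_clinear_op_def
  proof (intro conjI allI exI)
    show "R (z1 + z2) = R z1 + R z2" for z1 z2
      using L_eq[of "pre (z1 + z2)" "pre z1 + pre z2"]
      by (simp add: R_def B_pre clinear_op_add[OF B] clinear_op_add[OF P] clinear_op_add[OF L])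
    show "R (a *\<^sub>C z) = a *\<^sub>C R z" for a z
      using L_eq[of "pre (a *\<^sub>C z)" "a *\<^sub>C pre z"]
      by (simp add: R_def B_pre clinear_op_scaleC[OF B] clinear_op_scaleC[OF P] clinear_op_scaleC[OF L])
    show "norm (R z) \<le> norm z * C" for z
    proof -
      obtain x where x: "B x = P z" "norm x \<le> C * norm (P z)"
        using preimage[OF orth_proj_in[OF ran]] by (auto simp: P_def)
      have "norm (R z) = norm (x - orth_proj K x)"
        using L_eq[of "pre z" x] x(1) by (simp add: R_def B_pre L_def)
      also have "\<dots> \<le> norm x" by (rule norm_diff_orth_proj_le[OF K])
      also have "\<dots> \<le> C * norm (P z)" by (rule x(2))
      also have "\<dots> \<le> C * norm z"
        using C norm_orth_proj_le[OF ran] by (simp add: P_def mult_left_mono)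
      finally show ?thesis by (simp add: mult.commute)
    qed
  qed
  moreover have "B (R z) = z" if "z \<in> range B" for z
    using BL B_pre orth_proj_fixed[OF ran that] by (simp add: R_def P_def)
  ultimately show ?thesis using that by blast
qed

section \<open>Weighted least squares solutions\<close>

lemma seminormA_le_iff:
  "positive_op A \<Longrightarrow> seminormA A u \<le> seminormA A v \<longleftrightarrow> Re (cinner (A u) u) \<le> Re (cinner (A v) v)"
  by (simp add: seminormA_def positive_op_nonneg)

lemma is_A_LSS_iff_orthogonal:
  assumes A: "positive_op A" and B: "bounded_clinear_op B"
  shows "is_A_LSS A B y x0 \<longleftrightarrow> (\<forall>w. cinner (A (y - B x0)) (B w) = 0)"
proof
  assume LSS: "is_A_LSS A B y x0"
  show "\<forall>w. cinner (A (y - B x0)) (B w) = 0"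
  proof (intro allI positive_op_minimizer_orthogonal[OF A])
    fix w c
    have "y - B (x0 - c *\<^sub>C w) = y - B x0 + c *\<^sub>C B w"
      by (simp add: clinear_op_diff[OF B] clinear_op_scaleC[OF B])
    moreover have "Re (cinner (A (y - B x0)) (y - B x0))
        \<le> Re (cinner (A (y - B (x0 - c *\<^sub>C w))) (y - B (x0 - c *\<^sub>C w)))"
      using LSS by (simp add: is_A_LSS_def seminormA_le_iff[OF A])
    ultimately show "Re (cinner (A (y - B x0)) (y - B x0))
        \<le> Re (cinner (A (y - B x0 + c *\<^sub>C B w)) (y - B x0 + c *\<^sub>C B w))"
      by (simp only:)
  qed
next
  assume orth: "\<forall>w. cinner (A (y - B x0)) (B w) = 0"
  show "is_A_LSS A B y x0"
    unfolding is_A_LSS_def seminormA_le_iff[OF A]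
  proof
    fix x
    have eq: "y - B x = (y - B x0) + B (x0 - x)" by (simp add: clinear_op_diff[OF B])
    show "Re (cinner (A (y - B x0)) (y - B x0)) \<le> Re (cinner (A (y - B x)) (y - B x))"
      unfolding eq positive_op_quadratic_add[OF A]
      using orth positive_op_nonneg[OF A, of "B (x0 - x)"] by simp
  qed
qed

lemma is_A_LSS_add_kernel:
  assumes A: "positive_op A" and B: "bounded_clinear_op B"
    and LSS: "is_A_LSS A B y x0" and n: "A (B n) = 0"
  shows "is_A_LSS A B y (x0 + n)"
proof -
  have "A (y - B (x0 + n)) = A (y - B x0)"
    using n by (simp add: clinear_op_add[OF B] clinear_op_diff[OF positive_op_bounded_clinear[OF A]]
        diff_add_eq_diff_diff_swap)
  then show ?thesis using LSS by (simp add: is_A_LSS_iff_orthogonal[OF A B])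
qed

lemma compatible_if_A_selfadjoint_idempotent:
  fixes A E :: "'a::{complex_inner,complete_space} \<Rightarrow> 'a"
  assumes A: "positive_op A" and S: "closed_csubspace S" and E: "bounded_clinear_op E"
    and idem: "E \<circ> E = E" and range: "range E = S"
    and sym: "\<And>x y. cinner (A (E x)) y = cinner (A x) (E y)"
  shows "compatible A S"
proof -
  obtain Es where Es: "is_adjoint E Es" using adjoint_exists[OF E] .
  have "A (E y) = Es (A y)" for y
  proof -
    have "cinner x (Es (A y) - A (E y)) = 0" for x
    proof -
      have "cinner x (Es (A y)) = cinner (A (E x)) y"
        using Es positive_op_selfadjoint[OF A, of "E x" y] by (simp add: is_adjoint_def)
      also have "\<dots> = cinner x (A (E y))"
        unfolding sym by (rule positive_op_selfadjoint[OF A])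
      finally show ?thesis by (simp add: cinner_diff_right)
    qed
    then show ?thesis by (metis cinner_self_eq_0 eq_iff_diff_eq_0)
  qed
  then have "A \<circ> E = Es \<circ> A" by (simp add: fun_eq_iff)
  then show ?thesis unfolding compatible_def using A S E idem range Es by blast
qed

text \<open>A bounded \<open>Q\<close> into \<open>S\<close> with \<open>A\<close>-orthogonal residuals need not be idempotent, but
  \<open>E = Q + P\<^sub>0(I - Q)\<close>, with \<open>P\<^sub>0\<close> the orthogonal projection onto \<open>S \<inter> N(A)\<close>, is: residuals
  \<open>s - Q s\<close> of points of \<open>S\<close> lie in \<open>N(A)\<close>.\<close>
lemma compatible_if_A_orthogonal_quasi_projection:
  fixes A Q :: "'a::{complex_inner,complete_space} \<Rightarrow> 'a"
  assumes A: "positive_op A" and S: "closed_csubspace S" and Q: "bounded_clinear_op Q"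
    and into: "\<And>y. Q y \<in> S" and orth: "\<And>y s. s \<in> S \<Longrightarrow> cinner (A (y - Q y)) s = 0"
  shows "compatible A S"
proof -
  have A_lin: "bounded_clinear_op A" using A by (rule positive_op_bounded_clinear)
  define N0 where "N0 = S \<inter> {x. A x = 0}"
  have N0: "closed_csubspace N0"
    using S closed_csubspace_kernel[OF A_lin]
    by (auto simp: N0_def closed_csubspace_def)
  define P0 where "P0 = orth_proj N0"
  define E where "E y = Q y + P0 (y - Q y)" for y
  have E: "bounded_clinear_op E"
    unfolding E_def P0_def
    by (intro bounded_clinear_op_add Q bounded_clinear_op_compose[OF orth_proj_bounded_clinear[OF N0]]
        bounded_clinear_op_sub bounded_clinear_op_ident)
  have ES: "E y \<in> S" for y
    using closed_csubspace_add[OF S into] orth_proj_in[OF N0] by (auto simp: E_def P0_def N0_def)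
  have E_fixed: "E s = s" if s: "s \<in> S" for s
  proof -
    have "s - Q s \<in> S" using closed_csubspace_diff[OF S s into] .
    moreover from this have "Re (cinner (A (s - Q s)) (s - Q s)) = 0" by (simp add: orth)
    ultimately have "s - Q s \<in> N0"
      using positive_op_quadratic_eq_0[OF A] by (simp add: N0_def)
    then show ?thesis by (simp add: E_def P0_def orth_proj_fixed[OF N0])
  qed
  have AE: "A (E x) = A (Q x)" for x
    using orth_proj_in[OF N0, of "x - Q x"] by (simp add: E_def P0_def N0_def clinear_op_add[OF A_lin])
  have Q_right: "cinner (A (Q x)) y = cinner (A (Q x)) (Q y)" for x y
  proof -
    have "cinner (A (Q x)) (y - Q y) = cnj (cinner (A (y - Q y)) (Q x))"
      by (simp add: positive_op_selfadjoint[OF A] flip: cinner_commute)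
    then show ?thesis by (simp add: orth[OF into] cinner_diff_right)
  qed
  have Q_left: "cinner (A x) (Q y) = cinner (A (Q x)) (Q y)" for x y
    using orth[OF into, of x y] by (simp add: clinear_op_diff[OF A_lin] cinner_diff_left)
  show ?thesis
  proof (rule compatible_if_A_selfadjoint_idempotent[OF A S E])
    show "E \<circ> E = E" using E_fixed ES by (auto simp: fun_eq_iff)
    show "range E = S" using ES E_fixed by (metis image_subsetI rangeI subsetI subset_antisym)
    show "cinner (A (E x)) y = cinner (A x) (E y)" for x y
      using Q_right[of x y] Q_left[of x y] AE[of y]
      by (simp add: AE positive_op_selfadjoint[OF A, of x])
  qed
qed

lemma compatible_obtains_A_orthogonal_projection:
  assumes "compatible A S"
  obtains Q where "bounded_clinear_op Q" "\<And>y. Q y \<in> S" "\<And>s. s \<in> S \<Longrightarrow> Q s = s"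
    "\<And>u v. cinner (A (u - Q u)) (Q v) = 0"
proof -
  obtain Q Qs where Q: "bounded_clinear_op Q" "Q \<circ> Q = Q" "range Q = S" "is_adjoint Q Qs"
    "A \<circ> Q = Qs \<circ> A"
    using assms unfolding compatible_def by blast
  have QQ: "Q (Q x) = Q x" for x using Q(2) by (metis comp_apply)
  have "cinner (Q v) (A (u - Q u)) = cinner v (A (Q (u - Q u)))" for u v
    using Q(4,5) by (metis comp_apply is_adjoint_def)
  then have "cinner (A (u - Q u)) (Q v) = 0" for u v
    using assms QQ
    by (metis cinner_commute clinear_op_diff[OF Q(1)] clinear_op_zero cinner_zero_right complex_cnj_zero
        compatible_def positive_op_bounded_clinear diff_self)
  then show ?thesis
    using that Q(1,3) QQ by blast
qed

section \<open>Generalized inverses and compatibility\<close>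

lemma compatible_range_if_A_inverse:
  fixes B G :: "'a::{complex_inner,complete_space} \<Rightarrow> 'a"
  assumes A1: "positive_op A1" and B: "bounded_clinear_op B" and closed: "closed (range B)"
    and G: "is_A_inverse A1 B G"
  shows "compatible A1 (range B)"
proof (rule compatible_if_A_orthogonal_quasi_projection[OF A1 closed_csubspace_range[OF B closed]])
  show "bounded_clinear_op (\<lambda>y. B (G y))"
    using G by (simp add: is_A_inverse_def bounded_clinear_op_compose[OF B])
  show "cinner (A1 (y - B (G y))) s = 0" if "s \<in> range B" for y s
    using that G by (auto simp: is_A_inverse_def is_A_LSS_iff_orthogonal[OF A1 B])
qed simp

lemma compatible_kernel_if_AA_inverse:
  fixes B G :: "'a::{complex_inner,complete_space} \<Rightarrow> 'a"
  assumes A1: "positive_op A1" and A2: "positive_op A2" and B: "bounded_clinear_op B"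
    and G: "is_AA_inverse A1 A2 B G"
  shows "compatible A2 {x. A1 (B x) = 0}"
proof -
  let ?N = "{x. A1 (B x) = 0}"
  have G_lin: "bounded_clinear_op G" and LSS: "\<And>y. is_A_LSS A1 B y (G y)"
    and minimal: "\<And>y x0. is_A_LSS A1 B y x0 \<Longrightarrow> seminormA A2 (G y) \<le> seminormA A2 x0"
    using G by (simp_all add: is_AA_inverse_def is_A_inverse_def)
  have N: "closed_csubspace ?N"
    using closed_csubspace_kernel[OF bounded_clinear_op_compose[OF positive_op_bounded_clinear[OF A1] B]] .
  show ?thesis
  proof (rule compatible_if_A_orthogonal_quasi_projection[OF A2 N])
    show "bounded_clinear_op (\<lambda>x. x - G (B x))"
      by (intro bounded_clinear_op_sub bounded_clinear_op_ident bounded_clinear_op_compose[OF G_lin B])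
    show "x - G (B x) \<in> ?N" for x
    proof -
      have "cinner (A1 (B x - B (G (B x)))) (B (x - G (B x))) = 0"
        using LSS[of "B x"] is_A_LSS_iff_orthogonal[OF A1 B] by blast
      then have "Re (cinner (A1 (B (x - G (B x)))) (B (x - G (B x)))) = 0"
        by (simp add: clinear_op_diff[OF B])
      then show ?thesis using positive_op_quadratic_eq_0[OF A1] by simp
    qed
    fix x n assume n: "n \<in> ?N"
    have "cinner (A2 (G (B x))) n = 0"
    proof (rule positive_op_minimizer_orthogonal[OF A2])
      fix c
      have "is_A_LSS A1 B (B x) (G (B x) + c *\<^sub>C n)"
        using is_A_LSS_add_kernel[OF A1 B LSS] closed_csubspace_scaleC[OF N n] by simp
      then show "Re (cinner (A2 (G (B x))) (G (B x)))
          \<le> Re (cinner (A2 (G (B x) + c *\<^sub>C n)) (G (B x) + c *\<^sub>C n))"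
        using minimal seminormA_le_iff[OF A2] by blast
    qed
    then show "cinner (A2 (x - (x - G (B x)))) n = 0" by simp
  qed
qed

text \<open>With \<open>Q\<^sub>1, Q\<^sub>2\<close> the compatible projections onto \<open>R(B)\<close> and \<open>N(A\<^sub>1B)\<close> and \<open>R\<close> a bounded
  right inverse of \<open>B\<close>, the operator \<open>G = (I - Q\<^sub>2) R Q\<^sub>1\<close> is an \<open>A\<^sub>1A\<^sub>2\<close>-inverse: any two
  \<open>A\<^sub>1\<close>-least squares solutions differ by an element of \<open>N(A\<^sub>1B)\<close>, to which \<open>G y\<close> is
  \<open>A\<^sub>2\<close>-orthogonal.\<close>
lemma AA_inverse_if_compatible:
  fixes B :: "'a::{complex_inner,complete_space} \<Rightarrow> 'a"
  assumes A1: "positive_op A1" and A2: "positive_op A2" and B: "bounded_clinear_op B"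
    and closed: "closed (range B)"
    and compatible1: "compatible A1 (range B)" and compatible2: "compatible A2 {x. A1 (B x) = 0}"
  obtains G where "is_AA_inverse A1 A2 B G"
proof -
  have A1_lin: "bounded_clinear_op A1" using A1 by (rule positive_op_bounded_clinear)
  obtain Q1 where Q1: "bounded_clinear_op Q1" "\<And>y. Q1 y \<in> range B" "\<And>s. s \<in> range B \<Longrightarrow> Q1 s = s"
    "\<And>u v. cinner (A1 (u - Q1 u)) (Q1 v) = 0"
    using compatible_obtains_A_orthogonal_projection[OF compatible1] by blast
  obtain Q2 where Q2: "bounded_clinear_op Q2" "\<And>y. A1 (B (Q2 y)) = 0"
    "\<And>s. A1 (B s) = 0 \<Longrightarrow> Q2 s = s" "\<And>u v. cinner (A2 (u - Q2 u)) (Q2 v) = 0"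
    using compatible_obtains_A_orthogonal_projection[OF compatible2] by auto
  obtain R where R: "bounded_clinear_op R" "\<And>z. z \<in> range B \<Longrightarrow> B (R z) = z"
    using bounded_clinear_right_inverse[OF B closed] by blast
  define G where "G y = R (Q1 y) - Q2 (R (Q1 y))" for y
  have G_lin: "bounded_clinear_op G"
    unfolding G_def
    by (intro bounded_clinear_op_sub bounded_clinear_op_compose[OF R(1) Q1(1)]
        bounded_clinear_op_compose[OF Q2(1)])
  have residual: "A1 (y - B (G y)) = A1 (y - Q1 y)" for y
    using R(2)[OF Q1(2)] Q2(2)
    by (simp add: G_def clinear_op_diff[OF B] clinear_op_diff[OF A1_lin] clinear_op_add[OF A1_lin])
  have LSS: "is_A_LSS A1 B y (G y)" for y
    unfolding is_A_LSS_iff_orthogonal[OF A1 B] residual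
    using Q1(3,4) by (metis rangeI)
  have "seminormA A2 (G y) \<le> seminormA A2 x0" if x0: "is_A_LSS A1 B y x0" for y x0
  proof -
    define d where "d = x0 - G y"
    have "cinner (A1 (y - B (G y)) - A1 (y - B x0)) (B d) = 0"
      using LSS x0 by (simp add: is_A_LSS_iff_orthogonal[OF A1 B] cinner_diff_left)
    then have "Re (cinner (A1 (B d)) (B d)) = 0"
      by (simp add: d_def clinear_op_diff[OF B] clinear_op_diff[OF A1_lin])
    then have "Q2 d = d" using Q2(3) positive_op_quadratic_eq_0[OF A1] by simp
    then have "cinner (A2 (G y)) d = 0"
      using Q2(4)[of "R (Q1 y)" d] by (simp add: G_def)
    then have "Re (cinner (A2 x0) x0) = Re (cinner (A2 (G y)) (G y)) + Re (cinner (A2 d) d)"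
      using positive_op_quadratic_add[OF A2, of "G y" d] by (simp add: d_def)
    then show ?thesis
      using positive_op_nonneg[OF A2, of d] seminormA_le_iff[OF A2] by simp
  qed
  with G_lin LSS have "is_AA_inverse A1 A2 B G"
    by (simp add: is_AA_inverse_def is_A_inverse_def)
  then show ?thesis by (rule that)
qed

theorem mainTheorem18:
  fixes A1 A2 B :: "'a::{complex_inner, complete_space} \<Rightarrow> 'a"
  assumes "separable_space TYPE('a)"
    and "positive_op A1" and "positive_op A2"
    and "bounded_clinear_op B" and "closed (range B)"
  shows "(\<exists>G. is_AA_inverse A1 A2 B G) \<longleftrightarrow>
         (compatible A1 (range B) \<and> compatible A2 {x. A1 (B x) = 0})"
proof
  assume "\<exists>G. is_AA_inverse A1 A2 B G"
  then obtain G where G: "is_AA_inverse A1 A2 B G" by blast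
  then have "is_A_inverse A1 B G" by (simp add: is_AA_inverse_def)
  with G assms show "compatible A1 (range B) \<and> compatible A2 {x. A1 (B x) = 0}"
    using compatible_range_if_A_inverse compatible_kernel_if_AA_inverse by blast
next
  assume "compatible A1 (range B) \<and> compatible A2 {x. A1 (B x) = 0}"
  with assms show "\<exists>G. is_AA_inverse A1 A2 B G"
    using AA_inverse_if_compatible by metis
qed

end
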